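(* Let $G$ be an equilibrium graph of a bounded budget network creation game $(b_1,\dots,b_n)$-BG in the SUM version. Let $C$ be a subset of the vertices of $G$ and let $A$ be the vertex set of a connected component of $U(G-C)$, where $G-C$ is the subgraph induced by $V(G)\setminus C$. Assume that for every $v\in A$ we have $\operatorname{dist}(v,C)=1$ and the budget of $v$ is larger than $|C|$. Then every vertex in $A$ has local diameter at most $2$.
   Context: Bounded budget network creation game $(b_1,\dots,b_n)$-BG: $n$ players with integer budgets $0\le b_i\le n-1$. A strategy of player $i$ is a set $S_i\subseteq\{1,\dots,n\}\setminus\{i\}$ with $|S_i|=b_i$; a profile is realized by the directed graph $G$ on $u_1,\dots,u_n$ with an arc $\overrightarrow{u_iu_j}$ iff $j\in S_i$; the budget of vertex $u_i$ is $b_i$. $U(G)$ is the undirected multigraph obtained by ignoring directions. $\operatorname{dist}(u,v)$ is the distance in $U(G)$, defined as $n^2$ between different components; $\operatorname{dist}(u,C)=\min_{c\in C}\operatorname{dist}(u,c)$. The local diameter of $u$ is $\max_v\operatorname{dist}(u,v)$. SUM cost: $c_{SUM}(u)=\sum_v\operatorname{dist}(u,v)$. An equilibrium graph in the SUM version is a realization in which no vertex can decrease its SUM cost by changing its own strategy while the others are fixed. *)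

theory Defs
  imports Main
begin

text \<open>Vertices u_1..u_n are represented by 0..<n. A strategy profile is
  S :: nat \<Rightarrow> nat set, S i being the set of heads of arcs owned by vertex i.\<close>

definition valid_profile :: "nat \<Rightarrow> (nat \<Rightarrow> nat) \<Rightarrow> (nat \<Rightarrow> nat set) \<Rightarrow> bool" where
  "valid_profile n b S \<longleftrightarrow> (\<forall>i<n. S i \<subseteq> {0..<n} - {i} \<and> card (S i) = b i)"

definition adj :: "nat \<Rightarrow> (nat \<Rightarrow> nat set) \<Rightarrow> nat \<Rightarrow> nat \<Rightarrow> bool" where
  "adj n S u v \<longleftrightarrow> u < n \<and> v < n \<and> (v \<in> S u \<or> u \<in> S v)"

fun walk_in :: "nat \<Rightarrow> (nat \<Rightarrow> nat set) \<Rightarrow> nat set \<Rightarrow> nat \<Rightarrow> nat \<Rightarrow> nat \<Rightarrow> bool" where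
  "walk_in n S X 0 u v \<longleftrightarrow> u = v \<and> u \<in> X"
| "walk_in n S X (Suc k) u v \<longleftrightarrow> u \<in> X \<and> (\<exists>w. adj n S u w \<and> walk_in n S X k w v)"

text \<open>Distance in U(G); n^2 between different components.\<close>
definition gdist :: "nat \<Rightarrow> (nat \<Rightarrow> nat set) \<Rightarrow> nat \<Rightarrow> nat \<Rightarrow> nat" where
  "gdist n S u v = (if \<exists>k. walk_in n S {0..<n} k u v
                    then (LEAST k. walk_in n S {0..<n} k u v) else n ^ 2)"

definition dist_to_set :: "nat \<Rightarrow> (nat \<Rightarrow> nat set) \<Rightarrow> nat \<Rightarrow> nat set \<Rightarrow> nat" where
  "dist_to_set n S u C = Min ((\<lambda>c. gdist n S u c) ` C)"

definition local_diameter :: "nat \<Rightarrow> (nat \<Rightarrow> nat set) \<Rightarrow> nat \<Rightarrow> nat" where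
  "local_diameter n S u = Max ((\<lambda>v. gdist n S u v) ` {0..<n})"

definition sum_cost :: "nat \<Rightarrow> (nat \<Rightarrow> nat set) \<Rightarrow> nat \<Rightarrow> nat" where
  "sum_cost n S u = (\<Sum>v<n. gdist n S u v)"

definition sum_equilibrium :: "nat \<Rightarrow> (nat \<Rightarrow> nat) \<Rightarrow> (nat \<Rightarrow> nat set) \<Rightarrow> bool" where
  "sum_equilibrium n b S \<longleftrightarrow> valid_profile n b S \<and>
     (\<forall>i<n. \<forall>T. T \<subseteq> {0..<n} - {i} \<and> card T = b i \<longrightarrow>
        sum_cost n S i \<le> sum_cost n (S(i := T)) i)"

definition component_of_minus :: "nat \<Rightarrow> (nat \<Rightarrow> nat set) \<Rightarrow> nat set \<Rightarrow> nat set \<Rightarrow> bool" where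
  "component_of_minus n S C A \<longleftrightarrow> A \<noteq> {} \<and> A \<subseteq> {0..<n} - C \<and>
     (\<forall>u\<in>A. \<forall>v. v \<in> A \<longleftrightarrow> (\<exists>k. walk_in n S ({0..<n} - C) k u v))"

end

theory Submission
  imports Defs
begin

text \<open>Suppose some v \<in> A had a vertex x at distance at least 3. Since v's budget exceeds |C|, v
  can deviate by buying arcs to x and to every c \<in> C that owns no arc to v, filling the rest of
  its budget with old arcs. Then v is adjacent to all of C, so every vertex of C is within
  distance 1, every vertex of A within distance 2 (through a neighbour in C), and a vertex outside
  A \<union> C gets no farther, because a shortest walk to it leaves A through C. A dropped arc thus costs
  at most 1, a new arc gains at least 1, and x gains at least 2, so the SUM cost of v drops,
  contradicting equilibrium.\<close>

lemma walk_in_endpoints: "walk_in n S X k u w \<Longrightarrow> u \<in> X \<and> w \<in> X"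
  by (induction k arbitrary: u) auto

lemma walk_in_mono: "walk_in n S X k u w \<Longrightarrow> X \<subseteq> Y \<Longrightarrow> walk_in n S Y k u w"
  by (induction k arbitrary: u) auto

lemma walk_in_append:
  "walk_in n S X i u w \<Longrightarrow> walk_in n S X j w z \<Longrightarrow> walk_in n S X (i + j) u z"
  by (induction i arbitrary: u) auto

lemma adj_sym: "adj n S u w \<longleftrightarrow> adj n S w u"
  by (auto simp: adj_def)

lemma adj_fun_upd_other:
  "u \<noteq> v \<Longrightarrow> w \<noteq> v \<Longrightarrow> adj n (S(v := T)) u w \<longleftrightarrow> adj n S u w"
  by (simp add: adj_def)

lemma walk_in_fun_upd_avoiding:
  "v \<notin> X \<Longrightarrow> walk_in n (S(v := T)) X k u w \<longleftrightarrow> walk_in n S X k u w"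
proof (induction k arbitrary: u)
  case (Suc k)
  then show ?case
    by (metis adj_fun_upd_other walk_in.simps(2) walk_in_endpoints)
qed simp

lemma walk_in_iff_path:
  "walk_in n S X k u w \<longleftrightarrow>
     (\<exists>p. p 0 = u \<and> p k = w \<and> (\<forall>i\<le>k. p i \<in> X) \<and> (\<forall>i<k. adj n S (p i) (p (Suc i))))"
proof (induction k arbitrary: u)
  case 0
  show ?case by (auto intro: exI[of _ "\<lambda>_. u"])
next
  case (Suc k)
  show ?case
  proof
    assume "walk_in n S X (Suc k) u w"
    then obtain u' where u: "u \<in> X" "adj n S u u'" and "walk_in n S X k u' w" by auto
    then obtain p where "p 0 = u'" "p k = w" "\<forall>i\<le>k. p i \<in> X" "\<forall>i<k. adj n S (p i) (p (Suc i))"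
      using Suc.IH by blast
    with u show "\<exists>q. q 0 = u \<and> q (Suc k) = w \<and> (\<forall>i\<le>Suc k. q i \<in> X) \<and>
        (\<forall>i<Suc k. adj n S (q i) (q (Suc i)))"
      by (intro exI[of _ "case_nat u p"]) (auto split: nat.split)
  next
    assume "\<exists>p. p 0 = u \<and> p (Suc k) = w \<and> (\<forall>i\<le>Suc k. p i \<in> X) \<and>
        (\<forall>i<Suc k. adj n S (p i) (p (Suc i)))"
    then obtain p where p: "p 0 = u" "p (Suc k) = w" "\<forall>i\<le>Suc k. p i \<in> X"
        "\<forall>i<Suc k. adj n S (p i) (p (Suc i))" by blast
    have "walk_in n S X k (p 1) w"
      unfolding Suc.IH using p by (intro exI[of _ "\<lambda>i. p (Suc i)"]) auto
    with p show "walk_in n S X (Suc k) u w" by force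
  qed
qed

lemma walk_in_segment:
  assumes "\<forall>m\<le>k. p m \<in> X" "\<forall>m<k. adj n S (p m) (p (Suc m))" "i \<le> j" "j \<le> k"
  shows "walk_in n S X (j - i) (p i) (p j)"
  unfolding walk_in_iff_path using assms by (intro exI[of _ "\<lambda>m. p (i + m)"]) auto

text \<open>Pigeonhole: a walk of length at least n repeats a vertex, and the closed subwalk between the
  two visits can be cut out.\<close>
lemma walk_in_shorten:
  assumes "walk_in n S X k u w" "X \<subseteq> {0..<n}"
  shows "\<exists>k'<n. walk_in n S X k' u w"
  using assms(1)
proof (induction k rule: less_induct)
  case (less k)
  show ?case
  proof (cases "k < n")
    case False
    obtain p where p: "p 0 = u" "p k = w" "\<forall>i\<le>k. p i \<in> X" "\<forall>i<k. adj n S (p i) (p (Suc i))"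
      using less.prems walk_in_iff_path by metis
    have "card (p ` {0..k}) \<le> card {0..<n}"
      using p(3) assms(2) by (intro card_mono) auto
    then have "\<not> inj_on p {0..k}"
      using False by (auto dest: card_image)
    then obtain i j where ij: "i < j" "j \<le> k" "p i = p j"
      unfolding inj_on_def by (metis atLeastAtMost_iff linorder_neqE_nat)
    have "walk_in n S X i u (p j)" "walk_in n S X (k - j) (p j) w"
      using walk_in_segment[OF p(3,4), of 0 i] walk_in_segment[OF p(3,4), of j k] ij p(1,2)
      by auto
    then have "walk_in n S X (i + (k - j)) u w"
      by (rule walk_in_append)
    then show ?thesis
      using less.IH[of "i + (k - j)"] ij by auto
  qed (use less.prems in blast)
qed

lemma gdist_le_walk: "walk_in n S {0..<n} k u w \<Longrightarrow> gdist n S u w \<le> k"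
  unfolding gdist_def by (auto intro: Least_le)

lemma walk_in_gdist: "walk_in n S {0..<n} k u w \<Longrightarrow> walk_in n S {0..<n} (gdist n S u w) u w"
  unfolding gdist_def by (auto intro: LeastI)

lemma gdist_le_square: "gdist n S u w \<le> n\<^sup>2"
proof (cases "\<exists>k. walk_in n S {0..<n} k u w")
  case True
  then obtain k where "k < n" "walk_in n S {0..<n} k u w"
    using walk_in_shorten by blast
  then have "gdist n S u w \<le> n"
    using gdist_le_walk by fastforce
  also have "n \<le> n\<^sup>2"
    by (simp add: power2_eq_square)
  finally show ?thesis .
qed (simp add: gdist_def)

lemma walk_in_gdist_if_less_square:
  "gdist n S u w < n\<^sup>2 \<Longrightarrow> walk_in n S {0..<n} (gdist n S u w) u w"
proof -
  assume "gdist n S u w < n\<^sup>2"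
  then have "\<exists>k. walk_in n S {0..<n} k u w"
    unfolding gdist_def by (auto split: if_splits)
  then show ?thesis
    using walk_in_gdist by blast
qed

lemma gdist_self: "u < n \<Longrightarrow> gdist n S u u = 0"
  using gdist_le_walk[of n S 0 u u] by simp

lemma gdist_le_1_if_adj: "adj n S u w \<Longrightarrow> gdist n S u w \<le> 1"
  by (rule gdist_le_walk) (auto simp: adj_def)

lemma gdist_le_2_if_adj_adj: "adj n S u w \<Longrightarrow> adj n S w z \<Longrightarrow> gdist n S u z \<le> 2"
  by (rule gdist_le_walk) (auto simp: adj_def numeral_2_eq_2)

lemma walk_in_gdist_if_le_1:
  assumes "2 \<le> n" "gdist n S u w \<le> 1"
  shows "walk_in n S {0..<n} (gdist n S u w) u w"
proof (rule walk_in_gdist_if_less_square)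
  have "(2::nat)\<^sup>2 \<le> n\<^sup>2"
    using assms(1) by (rule power_mono) simp
  with assms(2) show "gdist n S u w < n\<^sup>2" by simp
qed

lemma gdist_pos: "2 \<le> n \<Longrightarrow> u \<noteq> w \<Longrightarrow> 0 < gdist n S u w"
  using walk_in_gdist_if_le_1[of n S u w] by (metis gr0I le0 walk_in.simps(1))

lemma gdist_le_1_iff:
  assumes "2 \<le> n" "u < n"
  shows "gdist n S u w \<le> 1 \<longleftrightarrow> u = w \<or> adj n S u w"
proof
  assume "gdist n S u w \<le> 1"
  with walk_in_gdist_if_le_1[OF assms(1) this] show "u = w \<or> adj n S u w"
    by (cases "gdist n S u w") auto
qed (use assms gdist_self gdist_le_1_if_adj in auto)

lemma component_adj_mem:
  assumes "component_of_minus n S C A" "u \<in> A" "adj n S u w"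
  shows "w \<in> A \<union> C"
proof (rule ccontr)
  assume "w \<notin> A \<union> C"
  moreover have "u \<in> {0..<n} - C" "w < n"
    using assms unfolding component_of_minus_def adj_def by auto
  ultimately have "walk_in n S ({0..<n} - C) 1 u w"
    using assms(3) by auto
  with assms(1,2) \<open>w \<notin> A \<union> C\<close> show False
    unfolding component_of_minus_def by blast
qed

lemma component_exit_through:
  assumes "component_of_minus n S C A" "u \<in> A \<union> C" "walk_in n S X j u y" "y \<notin> A"
  shows "\<exists>c\<in>C. \<exists>i\<le>j. walk_in n S X i c y"
  using assms(2,3)
proof (induction j arbitrary: u)
  case 0
  with assms(4) show ?case by auto
next
  case (Suc j)
  show ?case
  proof (cases "u \<in> C")
    case False
    from Suc.prems obtain w where "adj n S u w" "walk_in n S X j w y" by auto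
    with False Suc.prems(1) assms(1) show ?thesis
      using Suc.IH[of w] component_adj_mem by (meson UnE le_Suc_eq)
  qed (use Suc.prems in blast)
qed

lemma walk_in_last_visit:
  "walk_in n S X k u y \<Longrightarrow> y \<noteq> v \<Longrightarrow>
     walk_in n S (X - {v}) k u y \<or> (\<exists>j<k. \<exists>w. adj n S v w \<and> walk_in n S (X - {v}) j w y)"
proof (induction k arbitrary: u)
  case (Suc k)
  then obtain w where "u \<in> X" "adj n S u w" "walk_in n S X k w y" by auto
  with Suc.IH[of w] Suc.prems(2) show ?case
    by (cases "u = v") (auto simp: less_Suc_eq)
qed simp

text \<open>Once v is adjacent to all of C, v keeps its distance to every vertex outside A \<union> C: after its
  last visit to v, a shortest walk to such a vertex leaves A through some c \<in> C, and the rest of it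
  avoids v and so survives the change of strategy.\<close>
lemma gdist_fun_upd_outside_component:
  assumes comp: "component_of_minus n S C A" and vA: "v \<in> A"
    and adjC: "\<forall>c\<in>C. adj n (S(v := T)) v c"
    and y: "y \<notin> A \<union> C"
  shows "gdist n (S(v := T)) v y \<le> gdist n S v y"
proof (cases "\<exists>k. walk_in n S {0..<n} k v y")
  case True
  let ?k = "gdist n S v y"
  have "v < n" "y \<noteq> v"
    using comp vA y unfolding component_of_minus_def by auto
  have "walk_in n S {0..<n} ?k v y"
    using True walk_in_gdist by blast
  moreover have "\<not> walk_in n S ({0..<n} - {v}) ?k v y"
    using walk_in_endpoints by blast
  ultimately obtain j w where "j < ?k" "adj n S v w" and wy: "walk_in n S ({0..<n} - {v}) j w y"
    using walk_in_last_visit \<open>y \<noteq> v\<close> by blast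
  moreover have "w \<in> A \<union> C"
    using component_adj_mem comp vA \<open>adj n S v w\<close> by blast
  ultimately obtain c i where "c \<in> C" "i \<le> j" and "walk_in n S ({0..<n} - {v}) i c y"
    using component_exit_through[OF comp _ wy] y by blast
  then have "walk_in n (S(v := T)) ({0..<n} - {v}) i c y"
    by (simp add: walk_in_fun_upd_avoiding)
  then have "walk_in n (S(v := T)) {0..<n} i c y"
    by (rule walk_in_mono) auto
  with adjC \<open>c \<in> C\<close> \<open>v < n\<close> have "walk_in n (S(v := T)) {0..<n} (Suc i) v y"
    by auto
  with \<open>i \<le> j\<close> \<open>j < ?k\<close> show ?thesis
    using gdist_le_walk by fastforce
next
  case False
  then have "gdist n S v y = n\<^sup>2"
    unfolding gdist_def by simp
  with gdist_le_square show ?thesis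
    by metis
qed

lemma adj_fun_upd_kept:
  "adj n S v y \<Longrightarrow> y \<notin> S v - T \<Longrightarrow> y \<noteq> v \<Longrightarrow> adj n (S(v := T)) v y"
  by (auto simp: adj_def)

lemma gdist_fun_upd_le:
  assumes comp: "component_of_minus n S C A" and vA: "v \<in> A"
    and C_nbr: "\<forall>a\<in>A. \<exists>c\<in>C. adj n S a c"
    and adjC: "\<forall>c\<in>C. adj n (S(v := T)) v c"
  shows "gdist n (S(v := T)) v y \<le> gdist n S v y + of_bool (y \<in> S v - T)"
proof -
  let ?S' = "S(v := T)"
  have v: "v < n" "v \<notin> C"
    using comp vA unfolding component_of_minus_def by auto
  obtain c0 where "c0 \<in> C" "adj n S v c0"
    using C_nbr vA by blast
  with v have "c0 < n" "c0 \<noteq> v"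
    by (auto simp: adj_def)
  with v have n: "2 \<le> n"
    by linarith
  consider "y = v" | "y \<in> C" | "y \<in> A" "y \<noteq> v" | "y \<notin> A \<union> C"
    by blast
  then show ?thesis
  proof cases
    case 1
    with v gdist_self show ?thesis by simp
  next
    case 2
    with adjC gdist_le_1_if_adj have "gdist n ?S' v y \<le> 1"
      by blast
    moreover from 2 v have "0 < gdist n S v y"
      by (metis gdist_pos[OF n])
    ultimately show ?thesis by simp
  next
    case 3
    then obtain c where "c \<in> C" "adj n S y c"
      using C_nbr by blast
    with 3 v adjC have "gdist n ?S' v y \<le> 2"
      by (metis adj_fun_upd_other adj_sym gdist_le_2_if_adj_adj)
    moreover have "gdist n ?S' v y \<le> 1" if "adj n S v y" "y \<notin> S v - T"
      using that 3 adj_fun_upd_kept gdist_le_1_if_adj by metis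
    ultimately show ?thesis
      using 3 gdist_pos[OF n, of v y S] gdist_le_1_iff[OF n v(1), of S y] by fastforce
  next
    case 4
    with gdist_fun_upd_outside_component[OF comp vA adjC] show ?thesis
      by (simp add: trans_le_add1)
  qed
qed

lemma sum_less_by_exchange:
  fixes f g :: "'a \<Rightarrow> nat"
  assumes "finite I" "G \<subseteq> I" "D \<subseteq> I" "x \<in> I" "card G = card D"
    and le: "\<And>y. y \<in> I \<Longrightarrow> f y + of_bool (y \<in> G) + of_bool (y = x) \<le> g y + of_bool (y \<in> D)"
  shows "sum f I < sum g I"
proof -
  have "(\<Sum>y\<in>I. f y + of_bool (y \<in> G) + of_bool (y = x)) \<le> (\<Sum>y\<in>I. g y + of_bool (y \<in> D))"
    using le by (rule sum_mono)
  moreover have "I \<inter> {y. y \<in> G} = G" "I \<inter> {y. y \<in> D} = D" "I \<inter> {y. y = x} = {x}"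
    using assms(2-4) by auto
  ultimately have "sum f I + card G + 1 \<le> sum g I + card D"
    using assms(1) by (simp add: sum.distrib)
  with assms(5) show ?thesis by simp
qed

lemma sum_cost_exchange_less:
  assumes comp: "component_of_minus n S C A" and vA: "v \<in> A"
    and C_nbr: "\<forall>a\<in>A. \<exists>c\<in>C. adj n S a c"
    and T: "T \<subseteq> {0..<n} - {v}" "card T = card (S v)" and Sv: "S v \<subseteq> {0..<n}"
    and adjC: "\<forall>c\<in>C. adj n (S(v := T)) v c"
    and new_far: "\<forall>z\<in>T - S v. v \<notin> S z"
    and x: "x \<in> T" "3 \<le> gdist n S v x"
  shows "sum_cost n (S(v := T)) v < sum_cost n S v"
  unfolding sum_cost_def
proof (rule sum_less_by_exchange)
  have "finite T" "finite (S v)"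
    using finite_subset[OF T(1)] finite_subset[OF Sv] by auto
  with T(2) show "card (T - S v) = card (S v - T)"
    by (simp add: card_Diff_subset_Int Int_commute)
  have v: "v < n"
    using comp vA unfolding component_of_minus_def by auto
  with x T have n: "2 \<le> n"
    by auto
  have "x \<notin> S v"
  proof
    assume "x \<in> S v"
    with x T v have "adj n S v x"
      by (auto simp: adj_def)
    with x(2) show False
      using gdist_le_1_if_adj by fastforce
  qed
  fix y
  show "gdist n (S(v := T)) v y + of_bool (y \<in> T - S v) + of_bool (y = x)
          \<le> gdist n S v y + of_bool (y \<in> S v - T)"
  proof (cases "y \<in> T - S v")
    case True
    with v T have "gdist n (S(v := T)) v y \<le> 1"
      by (intro gdist_le_1_if_adj) (auto simp: adj_def)
    moreover have "2 \<le> gdist n S v y"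
      using True T new_far gdist_le_1_iff[OF n v, of S y] by (auto simp: adj_def)
    ultimately show ?thesis
      using x by auto
  next
    case False
    with x \<open>x \<notin> S v\<close> have "y \<noteq> x"
      by auto
    with False gdist_fun_upd_le[OF comp vA C_nbr adjC, of y] show ?thesis
      by auto
  qed
qed (use T Sv x in auto)

lemma exists_card_between:
  assumes "finite A" "finite B" "card A \<le> card B"
  obtains T where "A \<subseteq> T" "T \<subseteq> A \<union> B" "card T = card B"
proof -
  have "card B - card A \<le> card (B - A)"
    using assms by (simp add: card_Diff_subset_Int) (meson Int_lower2 card_mono diff_le_mono2)
  then obtain R where R: "R \<subseteq> B - A" "card R = card B - card A"
    by (meson obtain_subset_with_card_n)
  then have "card (A \<union> R) = card B"
    using assms finite_subset[OF R(1)] by (subst card_Un_disjoint) auto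
  with R(1) show thesis
    by (intro that[of "A \<union> R"]) auto
qed

lemma adj_if_dist_to_set_eq_1:
  assumes C: "C \<subseteq> {0..<n}" "C \<noteq> {}" and y: "y < n" "y \<notin> C"
    and dist: "dist_to_set n S y C = 1"
  shows "\<exists>c\<in>C. adj n S y c"
proof -
  have "finite C"
    using C(1) finite_subset by blast
  with C(2) have "dist_to_set n S y C \<in> (\<lambda>c. gdist n S y c) ` C"
    unfolding dist_to_set_def by (intro Min_in) auto
  with dist obtain c where c: "c \<in> C" "gdist n S y c = 1"
    by auto
  with C(1) y have "c < n" "c \<noteq> y"
    by auto
  with c y show ?thesis
    using gdist_le_1_iff[of n y S c] by fastforce
qed

lemma local_diameter_le_iff:
  "0 < n \<Longrightarrow> local_diameter n S u \<le> d \<longleftrightarrow> (\<forall>y<n. gdist n S u y \<le> d)"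
  unfolding local_diameter_def by (auto simp: Max_le_iff)

lemma improving_deviation:
  assumes valid: "valid_profile n b S" and C: "C \<subseteq> {0..<n}"
    and comp: "component_of_minus n S C A" and C_nbr: "\<forall>a\<in>A. \<exists>c\<in>C. adj n S a c"
    and vA: "v \<in> A" and budget: "card C < b v"
    and x: "x < n" "3 \<le> gdist n S v x"
  obtains T where "T \<subseteq> {0..<n} - {v}" "card T = b v"
    "sum_cost n (S(v := T)) v < sum_cost n S v"
proof -
  define K where "K = {c \<in> C. v \<notin> S c}"
  have v: "v < n" "v \<notin> C"
    using comp vA unfolding component_of_minus_def by auto
  have Sv: "S v \<subseteq> {0..<n} - {v}" "card (S v) = b v"
    using valid v unfolding valid_profile_def by auto
  have "finite C"
    using C finite_subset by blast
  then have "finite K" "card K \<le> card C"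
    by (auto simp: K_def intro: card_mono)
  then have room: "card (insert x K) \<le> card (S v)"
    using budget Sv(2) by (simp add: card_insert_if)
  have "finite (insert x K)" "finite (S v)"
    using \<open>finite K\<close> finite_subset[OF Sv(1)] by auto
  then obtain T where T: "insert x K \<subseteq> T" "T \<subseteq> insert x K \<union> S v" "card T = card (S v)"
    using exists_card_between room by blast
  have "x \<notin> S v" "v \<notin> S x"
    using x v gdist_le_1_if_adj[of n S v x] by (auto simp: adj_def)
  have "x \<noteq> v"
    using x v gdist_self by force
  with T(2) x C v Sv(1) have Tsub: "T \<subseteq> {0..<n} - {v}"
    by (auto simp: K_def)
  have adjC: "\<forall>c\<in>C. adj n (S(v := T)) v c"
    using T(1) Tsub v C by (auto simp: adj_def K_def)
  have new_far: "\<forall>z\<in>T - S v. v \<notin> S z"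
    using T(2) \<open>v \<notin> S x\<close> by (auto simp: K_def)
  have "sum_cost n (S(v := T)) v < sum_cost n S v"
    using sum_cost_exchange_less[OF comp vA C_nbr Tsub T(3) _ adjC new_far] T(1) x Sv(1) by auto
  with Tsub T(3) Sv(2) show thesis
    by (intro that) auto
qed

theorem mainTheorem19:
  fixes n :: nat and b :: "nat \<Rightarrow> nat" and S :: "nat \<Rightarrow> nat set"
    and C A :: "nat set"
  assumes eq: "sum_equilibrium n b S"
    and C: "C \<subseteq> {0..<n}"
    and A: "component_of_minus n S C A"
    and Cne: "C \<noteq> {}"
    and distC: "\<forall>v\<in>A. dist_to_set n S v C = 1"
    and budget: "\<forall>v\<in>A. b v > card C"
  shows "\<forall>v\<in>A. local_diameter n S v \<le> 2"
proof
  have valid: "valid_profile n b S"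
    using eq unfolding sum_equilibrium_def by blast
  have C_nbr: "\<forall>a\<in>A. \<exists>c\<in>C. adj n S a c"
  proof
    fix a assume "a \<in> A"
    with A have "a < n" "a \<notin> C"
      unfolding component_of_minus_def by auto
    with \<open>a \<in> A\<close> distC show "\<exists>c\<in>C. adj n S a c"
      using adj_if_dist_to_set_eq_1[OF C Cne] by blast
  qed
  fix v assume vA: "v \<in> A"
  then have v: "v < n"
    using A unfolding component_of_minus_def by auto
  show "local_diameter n S v \<le> 2"
  proof (rule ccontr)
    assume "\<not> local_diameter n S v \<le> 2"
    with v obtain x where x: "x < n" "3 \<le> gdist n S v x"
      by (auto simp: local_diameter_le_iff not_le Suc_le_eq)
    obtain T where T: "T \<subseteq> {0..<n} - {v}" "card T = b v"
      and "sum_cost n (S(v := T)) v < sum_cost n S v"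
      using improving_deviation[OF valid C A C_nbr vA _ x] budget vA by blast
    moreover have "sum_cost n S v \<le> sum_cost n (S(v := T)) v"
      using eq v T unfolding sum_equilibrium_def by blast
    ultimately show False
      by simp
  qed
qed

end
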